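(* For each $\alpha\in(0,\pi/2)$ and $\beta\in[0,\alpha]$, the competitive ratio of the $\beta$-Hedge algorithm with parameter $\beta$ equals $$\max_{r\in[\max\{0,-\cos(2\alpha)\},\,1]} f_1(\alpha,\beta,r).$$
   Context: Online drone coverage on a line. A drone has a fixed half angle-of-view $\alpha\in(0,\pi/2)$. A drone at a point $T=(t_x,t_y)$ with $t_y\ge 0$ covers the segment $[t_x-t_y\tan\alpha,\ t_x+t_y\tan\alpha]$ of the $x$-axis. For a point $X=(x,0)$ its feasibility cone is $\mathrm{FC}(X)=\{(u,v): v\ge 0,\ |u-x|\le v\tan\alpha\}$, and the feasibility cone of a finite set of points is the intersection of their cones. An input is a sequence $X_0=(0,0),X_1,\dots,X_n$ ($n\ge1$) of points $X_i=(x_i,0)$ revealed one at a time. A solution is a sequence of positions $P_0=(0,0),P_1,\dots,P_n$ with $P_i\in\mathrm{FC}(X_0,\dots,X_i)$; its cost is $\sum_i|P_iP_{i+1}|$. $\mathrm{OPT}(\mathbf X;\alpha)$ is the minimum cost of a solution (input known in advance). A request $X_{i+1}$ is redundant if $x_{i+1}\in[\min_{j\le i}x_j,\max_{j\le i}x_j]$. An input is good if it has no redundant requests, $\min_j x_j=-1$ and $\max_j x_j\in[0,1]$. The competitive ratio of an algorithm is the supremum over good inputs of its cost divided by $\mathrm{OPT}$. The $\beta$-Hedge algorithm with parameter $\beta\in[0,\alpha]$: if $P_{i-1}\in\mathrm{FC}(X_0,\dots,X_i)$ then $P_i=P_{i-1}$; otherwise the drone moves from $P_{i-1}$ along the ray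 with direction $(\operatorname{sgn}(x_i)\sin\beta,\cos\beta)$ (angle $\beta$ from the upward vertical, tilted toward the new request), and $P_i$ is the first point of this ray in $\mathrm{FC}(X_0,\dots,X_i)$. $$f_1(\alpha,\beta,r)=\frac{2\sin\alpha}{\cos\beta(\tan\alpha+\tan\beta)}\cdot\frac{1+\frac{2\tan\beta}{\tan\alpha+\tan\beta}\,r}{\sqrt{1+r^2+2\cos(2\alpha)\,r}}.$$ *)

theory Defs
  imports "HOL-Analysis.Analysis"
begin

text \<open>Points of the plane are pairs (u,v) :: real \<times> real. An input is a pair
  (n, xs) with n \<ge> 1 and requests X_i = (xs i, 0) for i = 0..n (values of xs
  beyond n are irrelevant).\<close>

definition edist :: "real \<times> real \<Rightarrow> real \<times> real \<Rightarrow> real" where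
  "edist P Q = sqrt ((fst P - fst Q)^2 + (snd P - snd Q)^2)"

definition FC :: "real \<Rightarrow> (nat \<Rightarrow> real) \<Rightarrow> nat \<Rightarrow> (real \<times> real) set" where
  "FC \<alpha> xs i = {(u, v). v \<ge> 0 \<and> (\<forall>j\<le>i. \<bar>u - xs j\<bar> \<le> v * tan \<alpha>)}"

definition cost :: "nat \<Rightarrow> (nat \<Rightarrow> real \<times> real) \<Rightarrow> real" where
  "cost n P = (\<Sum>i<n. edist (P i) (P (Suc i)))"

definition is_solution :: "real \<Rightarrow> nat \<Rightarrow> (nat \<Rightarrow> real) \<Rightarrow> (nat \<Rightarrow> real \<times> real) \<Rightarrow> bool" where
  "is_solution \<alpha> n xs P \<longleftrightarrow> P 0 = (0, 0) \<and> (\<forall>i\<le>n. P i \<in> FC \<alpha> xs i)"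

definition OPT :: "real \<Rightarrow> nat \<Rightarrow> (nat \<Rightarrow> real) \<Rightarrow> real" where
  "OPT \<alpha> n xs = Inf {cost n P | P. is_solution \<alpha> n xs P}"

definition redundant :: "(nat \<Rightarrow> real) \<Rightarrow> nat \<Rightarrow> bool" where
  "redundant xs i \<longleftrightarrow>
     (MIN j\<in>{..i}. xs j) \<le> xs (Suc i) \<and> xs (Suc i) \<le> (MAX j\<in>{..i}. xs j)"

definition good_input :: "nat \<Rightarrow> (nat \<Rightarrow> real) \<Rightarrow> bool" where
  "good_input n xs \<longleftrightarrow> n \<ge> 1 \<and> xs 0 = 0 \<and> (\<forall>i<n. \<not> redundant xs i)
     \<and> (MIN j\<in>{..n}. xs j) = -1
     \<and> 0 \<le> (MAX j\<in>{..n}. xs j) \<and> (MAX j\<in>{..n}. xs j) \<le> 1"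

definition ray_pt :: "real \<Rightarrow> real \<Rightarrow> real \<times> real \<Rightarrow> real \<Rightarrow> real \<times> real" where
  "ray_pt \<beta> x P t = (fst P + t * (sgn x * sin \<beta>), snd P + t * cos \<beta>)"

text \<open>Positions of the beta-Hedge algorithm; the first point of the ray in the
  (closed) feasibility cone is the one with the least parameter t \<ge> 0.\<close>
primrec hedge :: "real \<Rightarrow> real \<Rightarrow> (nat \<Rightarrow> real) \<Rightarrow> nat \<Rightarrow> real \<times> real" where
  "hedge \<alpha> \<beta> xs 0 = (0, 0)"
| "hedge \<alpha> \<beta> xs (Suc i) =
     (let P = hedge \<alpha> \<beta> xs i in
      if P \<in> FC \<alpha> xs (Suc i) then P
      else ray_pt \<beta> (xs (Suc i)) P
             (Inf {t. t \<ge> 0 \<and> ray_pt \<beta> (xs (Suc i)) P t \<in> FC \<alpha> xs (Suc i)}))"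

text \<open>Competitive ratio of beta-Hedge: supremum over good inputs of ALG / OPT
  (taken in the extended reals, so an unbounded ratio gives \<infinity>).\<close>
definition hedge_CR :: "real \<Rightarrow> real \<Rightarrow> ereal" where
  "hedge_CR \<alpha> \<beta> =
     (SUP (n, xs) \<in> {(n, xs). good_input n xs}.
        ereal (cost n (hedge \<alpha> \<beta> xs) / OPT \<alpha> n xs))"

definition f1 :: "real \<Rightarrow> real \<Rightarrow> real \<Rightarrow> real" where
  "f1 \<alpha> \<beta> r =
     (2 * sin \<alpha> / (cos \<beta> * (tan \<alpha> + tan \<beta>))) *
     ((1 + (2 * tan \<beta> / (tan \<alpha> + tan \<beta>)) * r) /
      sqrt (1 + r^2 + 2 * cos (2 * \<alpha>) * r))"

end

(*
  Write L and R for the ends of the segment covered by a drone.  The beta-Hedge drone only moves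
  upwards, along rays at angle beta from the vertical, so its cost is its final height divided by
  cos beta, i.e. (R - L) / (2 tan alpha cos beta).  When a request pushes one end of the covered
  segment outwards by d, the other end moves outwards by kappa d, where
  kappa = (tan alpha - tan beta) / (tan alpha + tan beta).  An invariant relating L, R and the
  extreme requests bounds R - L at the end by (1 + kappa) (1 + (1 - kappa) b), where [-1, b] is
  the hull of the requests.  Every solution ends in the cone of points covering [-1, b], so OPT is
  at least the distance from the origin to that cone: the norm of its apex if b >= -cos(2 alpha),
  and at least cos alpha, the norm of the apex for b = -cos(2 alpha), otherwise.  As the cost bound
  increases with b, the ratio is at most f1 at max b (-cos(2 alpha)).  The inputs 0, -1 and
  0, r, -1 attain these bounds.
*)

theory Submission
  imports Defs
begin

lemma Min_atMost_Suc: "(MIN j\<in>{..Suc i}. xs j) = min (MIN j\<in>{..i}. xs j) (xs (Suc i))"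
  by (simp add: atMost_Suc min.commute)

lemma Max_atMost_Suc: "(MAX j\<in>{..Suc i}. xs j) = max (MAX j\<in>{..i}. xs j) (xs (Suc i))"
  by (simp add: atMost_Suc max.commute)

lemma Min_le_Max_atMost: "(MIN j\<in>{..i::nat}. xs j) \<le> (MAX j\<in>{..i}. xs j)"
  by (meson Max_ge Min_le atMost_iff finite_atMost finite_imageI image_eqI le0 order.trans)

lemma Min_Max_atMost_Suc_above:
  fixes xs :: "nat \<Rightarrow> 'a::linorder"
  assumes "(MAX j\<in>{..i}. xs j) < xs (Suc i)"
  shows "(MIN j\<in>{..Suc i}. xs j) = (MIN j\<in>{..i}. xs j)" and "(MAX j\<in>{..Suc i}. xs j) = xs (Suc i)"
proof -
  have "(MIN j\<in>{..i}. xs j) \<le> xs (Suc i)" "(MAX j\<in>{..i}. xs j) \<le> xs (Suc i)"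
    using Min_le_Max_atMost[of xs i] assms by (meson less_imp_le order.trans)+
  then show "(MIN j\<in>{..Suc i}. xs j) = (MIN j\<in>{..i}. xs j)" and "(MAX j\<in>{..Suc i}. xs j) = xs (Suc i)"
    by (simp_all only: Min_atMost_Suc Max_atMost_Suc min_absorb1 max_absorb2)
qed

lemma Min_Max_atMost_Suc_below:
  fixes xs :: "nat \<Rightarrow> 'a::linorder"
  assumes "xs (Suc i) < (MIN j\<in>{..i}. xs j)"
  shows "(MIN j\<in>{..Suc i}. xs j) = xs (Suc i)" and "(MAX j\<in>{..Suc i}. xs j) = (MAX j\<in>{..i}. xs j)"
proof -
  have "xs (Suc i) \<le> (MIN j\<in>{..i}. xs j)" "xs (Suc i) \<le> (MAX j\<in>{..i}. xs j)"
    using Min_le_Max_atMost[of xs i] assms by (meson less_imp_le order.trans)+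
  then show "(MIN j\<in>{..Suc i}. xs j) = xs (Suc i)" and "(MAX j\<in>{..Suc i}. xs j) = (MAX j\<in>{..i}. xs j)"
    by (simp_all only: Min_atMost_Suc Max_atMost_Suc min_absorb2 max_absorb1)
qed

lemma edist_eq_dist: "edist P Q = dist P Q"
  by (simp add: edist_def dist_prod_def dist_real_def)

lemma cost_Suc: "cost (Suc n) P = cost n P + edist (P n) (P (Suc n))"
  by (simp add: cost_def)

lemma cost_nonneg: "0 \<le> cost n P"
  by (simp add: cost_def edist_eq_dist sum_nonneg)

lemma dist_le_cost: "dist (P 0) (P n) \<le> cost n P"
proof (induction n)
  case (Suc n)
  have "dist (P 0) (P (Suc n)) \<le> dist (P 0) (P n) + dist (P n) (P (Suc n))"
    by (rule dist_triangle)
  then show ?case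
    using Suc by (simp add: cost_Suc edist_eq_dist)
qed (simp add: cost_def)

section \<open>The covered segment\<close>

definition cover_left :: "real \<Rightarrow> real \<times> real \<Rightarrow> real" where
  "cover_left \<alpha> P = fst P - snd P * tan \<alpha>"

definition cover_right :: "real \<Rightarrow> real \<times> real \<Rightarrow> real" where
  "cover_right \<alpha> P = fst P + snd P * tan \<alpha>"

lemma mem_FC_iff:
  "P \<in> FC \<alpha> xs i \<longleftrightarrow> 0 \<le> snd P \<and> cover_left \<alpha> P \<le> (MIN j\<in>{..i}. xs j)
     \<and> (MAX j\<in>{..i}. xs j) \<le> cover_right \<alpha> P"
proof -
  have "\<bar>fst P - xs j\<bar> \<le> snd P * tan \<alpha> \<longleftrightarrow> cover_left \<alpha> P \<le> xs j \<and> xs j \<le> cover_right \<alpha> P" for j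
    by (auto simp: cover_left_def cover_right_def abs_le_iff)
  then show ?thesis
    by (auto simp: FC_def case_prod_beta Min_ge_iff Max_le_iff)
qed

declare hedge.simps(2) [simp del]

lemma ray_pt_0 [simp]: "ray_pt \<beta> x P 0 = P"
  by (simp add: ray_pt_def)

lemma hedge_Suc_eq_ray_pt:
  assumes "{\<tau>. 0 \<le> \<tau> \<and> ray_pt \<beta> (xs (Suc i)) (hedge \<alpha> \<beta> xs i) \<tau> \<in> FC \<alpha> xs (Suc i)} = {t..}"
    and "0 \<le> t"
  shows "hedge \<alpha> \<beta> xs (Suc i) = ray_pt \<beta> (xs (Suc i)) (hedge \<alpha> \<beta> xs i) t"
proof (cases "hedge \<alpha> \<beta> xs i \<in> FC \<alpha> xs (Suc i)")
  case True
  then have "0 \<in> {t..}"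
    unfolding assms(1)[symmetric] by simp
  then have "t = 0"
    using assms(2) by simp
  then show ?thesis
    using True by (simp add: hedge.simps)
next
  case False
  then show ?thesis
    using assms by (simp add: hedge.simps Let_def)
qed

lemma dist_ray_pt: "x \<noteq> 0 \<Longrightarrow> dist P (ray_pt \<beta> x P t) = \<bar>t\<bar>"
proof -
  assume "x \<noteq> 0"
  then have "(t * (sgn x * sin \<beta>))\<^sup>2 + (t * cos \<beta>)\<^sup>2 = t\<^sup>2"
    by (simp add: power_mult_distrib sgn_if flip: distrib_left)
  then show ?thesis
    by (simp add: dist_prod_def dist_real_def ray_pt_def)
qed

lemma cover_left_apfst_uminus: "cover_left \<alpha> (apfst uminus P) = - cover_right \<alpha> P"
  by (simp add: cover_left_def cover_right_def)

lemma cover_right_apfst_uminus: "cover_right \<alpha> (apfst uminus P) = - cover_left \<alpha> P"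
  by (simp add: cover_left_def cover_right_def)

lemma dist_apfst_uminus: "dist (apfst uminus P) (apfst uminus Q) = dist P (Q :: real \<times> real)"
  by (simp add: dist_prod_def dist_minus)

lemma apfst_uminus_mem_FC_iff: "apfst uminus P \<in> FC \<alpha> (\<lambda>j. - xs j) i \<longleftrightarrow> P \<in> FC \<alpha> xs i"
  by (cases P) (simp add: FC_def abs_minus_commute)

lemma ray_pt_apfst_uminus: "ray_pt \<beta> (- x) (apfst uminus P) t = apfst uminus (ray_pt \<beta> x P t)"
  by (simp add: ray_pt_def sgn_minus)

lemma hedge_uminus: "hedge \<alpha> \<beta> (\<lambda>j. - xs j) i = apfst uminus (hedge \<alpha> \<beta> xs i)"
proof (induction i)
  case (Suc i)
  have "ray_pt \<beta> (- xs (Suc i)) (apfst uminus (hedge \<alpha> \<beta> xs i)) t \<in> FC \<alpha> (\<lambda>j. - xs j) (Suc i)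
      \<longleftrightarrow> ray_pt \<beta> (xs (Suc i)) (hedge \<alpha> \<beta> xs i) t \<in> FC \<alpha> xs (Suc i)" for t
    by (simp only: ray_pt_apfst_uminus apfst_uminus_mem_FC_iff)
  then show ?case
    by (simp add: hedge.simps Suc.IH Let_def apfst_uminus_mem_FC_iff ray_pt_apfst_uminus)
qed simp

section \<open>An invariant of the covered segment\<close>

text \<open>\<open>L\<close>, \<open>R\<close>: ends of the covered segment; \<open>m\<close>, \<open>M\<close>: extreme requests so far.\<close>
definition cover_invariant :: "real \<Rightarrow> real \<Rightarrow> real \<Rightarrow> real \<Rightarrow> real \<Rightarrow> bool" where
  "cover_invariant c L R m M \<longleftrightarrow> L \<le> m \<and> M \<le> R
     \<and> (1 - c\<^sup>2) * m \<le> L + c * R \<and> L + c * R \<le> 0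
     \<and> 0 \<le> R + c * L \<and> R + c * L \<le> (1 - c\<^sup>2) * M
     \<and> (R = M \<or> L = m)"

lemma cover_invariant_reflect:
  "cover_invariant c (- R) (- L) (- M) (- m) \<longleftrightarrow> cover_invariant c L R m M"
  by (auto simp: cover_invariant_def algebra_simps)

lemma cover_invariant_step_right:
  assumes c: "0 \<le> c" "c \<le> 1" and inv: "cover_invariant c L R m M" and x: "M < x"
  shows "cover_invariant c (L - c * max 0 (x - R)) (max R x) m x"
proof (cases "x \<le> R")
  case True
  have "(1 - c\<^sup>2) * M \<le> (1 - c\<^sup>2) * x"
    using x c by (intro mult_left_mono) (auto simp: power2_eq_square mult_le_one)
  then show ?thesis
    using inv True x by (auto simp: cover_invariant_def max_def)
next
  case False
  have "c * (L + c * R) \<le> 0"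
    using inv c by (auto simp: cover_invariant_def intro: mult_nonneg_nonpos)
  moreover have "0 \<le> (1 - c\<^sup>2) * (x - R)"
    using False c by (intro mult_nonneg_nonneg) (auto simp: power2_eq_square mult_le_one)
  moreover have "0 \<le> c * (x - R)"
    using False c by simp
  ultimately show ?thesis
    using inv False by (auto simp: cover_invariant_def max_def algebra_simps power2_eq_square)
qed

lemma cover_invariant_step_left:
  assumes c: "0 \<le> c" "c \<le> 1" and inv: "cover_invariant c L R m M" and x: "x < m"
  shows "cover_invariant c (min L x) (R + c * max 0 (L - x)) x M"
proof -
  have "cover_invariant c (- R - c * max 0 (- x - - L)) (max (- L) (- x)) (- M) (- x)"
    using cover_invariant_step_right[OF c, of "- R" "- L" "- M" "- m" "- x"] inv x
    by (simp add: cover_invariant_reflect)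
  moreover have "- R - c * max 0 (- x - - L) = - (R + c * max 0 (L - x))"
    and "max (- L) (- x) = - min L x"
    by (simp_all add: max_def min_def)
  ultimately show ?thesis
    by (simp only: cover_invariant_reflect)
qed

lemma cover_invariant_width_le:
  assumes c: "0 \<le> c" "c \<le> 1" and inv: "cover_invariant c L R (- 1) b" and b: "0 \<le> b" "b \<le> 1"
  shows "R - L \<le> (1 + c) * (1 + (1 - c) * b)"
proof -
  have width: "(1 + c) * (1 + (1 - c) * b) = 1 + c + b - c\<^sup>2 * b"
    by (simp add: algebra_simps power2_eq_square)
  from inv consider "R = b" | "L = - 1"
    by (auto simp: cover_invariant_def)
  then show ?thesis
  proof cases
    case 1
    have "0 \<le> c * (1 + c) * (1 - b)"
      using c b by simp
    then show ?thesis
      using inv 1 width by (simp add: cover_invariant_def algebra_simps power2_eq_square)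
  next
    case 2
    then show ?thesis
      using inv width by (simp add: cover_invariant_def algebra_simps power2_eq_square)
  qed
qed

lemma mem_FC_if_cover_invariant:
  assumes "cover_invariant c (cover_left \<alpha> P) (cover_right \<alpha> P) (MIN j\<in>{..i}. xs j) (MAX j\<in>{..i}. xs j)"
    and "0 < tan \<alpha>"
  shows "P \<in> FC \<alpha> xs i"
proof -
  have "cover_left \<alpha> P \<le> (MIN j\<in>{..i}. xs j)" "(MAX j\<in>{..i}. xs j) \<le> cover_right \<alpha> P"
    using assms(1) unfolding cover_invariant_def by blast+
  then have "0 \<le> cover_right \<alpha> P - cover_left \<alpha> P"
    using Min_le_Max_atMost[of xs i] by linarith
  then have "0 \<le> snd P"
    using assms(2) by (simp add: cover_left_def cover_right_def zero_le_mult_iff)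
  then show ?thesis
    using assms(1) by (simp add: mem_FC_iff cover_invariant_def)
qed

section \<open>The offline optimum\<close>

text \<open>The lowest position covering \<open>[-1, r]\<close>; it covers exactly this segment.\<close>
definition apex :: "real \<Rightarrow> real \<Rightarrow> real \<times> real" where
  "apex \<alpha> r = ((r - 1) / 2, (1 + r) / (2 * tan \<alpha>))"

lemma cover_apex:
  assumes "tan \<alpha> \<noteq> 0"
  shows "cover_left \<alpha> (apex \<alpha> r) = - 1" and "cover_right \<alpha> (apex \<alpha> r) = r"
  using assms by (simp_all add: apex_def cover_left_def cover_right_def field_simps)

lemma f1_radicand_pos:
  assumes "0 < \<alpha>" and "\<alpha> < pi / 2"
  shows "0 < 1 + r\<^sup>2 + 2 * cos (2 * \<alpha>) * r"
proof -
  have "0 < sin (2 * \<alpha>)"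
    using assms by (intro sin_gt_zero) auto
  moreover have "1 + r\<^sup>2 + 2 * cos (2 * \<alpha>) * r = (r + cos (2 * \<alpha>))\<^sup>2 + (sin (2 * \<alpha>))\<^sup>2"
    using sin_cos_squared_add[of "2 * \<alpha>"] by algebra
  ultimately show ?thesis
    by (simp add: add_nonneg_pos)
qed

lemma norm_apex:
  assumes "0 < \<alpha>" and "\<alpha> < pi / 2"
  shows "norm (apex \<alpha> r) = sqrt (1 + r\<^sup>2 + 2 * cos (2 * \<alpha>) * r) / (2 * sin \<alpha>)"
proof -
  have sin: "0 < sin \<alpha>" and cos: "0 < cos \<alpha>"
    using assms by (auto intro: sin_gt_zero cos_gt_zero_pi)
  have "(2 * sin \<alpha>)\<^sup>2 * (((r - 1) / 2)\<^sup>2 + ((1 + r) / (2 * tan \<alpha>))\<^sup>2)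
      = (sin \<alpha>)\<^sup>2 * (r - 1)\<^sup>2 + (cos \<alpha>)\<^sup>2 * (1 + r)\<^sup>2"
    using sin cos by (simp add: tan_def field_simps power2_eq_square)
  also have "\<dots> = 1 + r\<^sup>2 + 2 * cos (2 * \<alpha>) * r"
    using sin_cos_squared_add[of \<alpha>] unfolding cos_double by algebra
  finally have "((r - 1) / 2)\<^sup>2 + ((1 + r) / (2 * tan \<alpha>))\<^sup>2 = (1 + r\<^sup>2 + 2 * cos (2 * \<alpha>) * r) / (2 * sin \<alpha>)\<^sup>2"
    using sin by (simp add: field_simps)
  then show ?thesis
    using sin by (simp add: apex_def norm_Pair power_divide real_sqrt_divide real_sqrt_mult)
qed

lemma norm_apex_neg_cos_double:
  assumes "0 < \<alpha>" and "\<alpha> < pi / 2"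
  shows "norm (apex \<alpha> (- cos (2 * \<alpha>))) = cos \<alpha>"
proof -
  have "0 < sin \<alpha>" "0 < cos \<alpha>"
    using assms by (auto intro: sin_gt_zero cos_gt_zero_pi)
  moreover have "1 + (- cos (2 * \<alpha>))\<^sup>2 + 2 * cos (2 * \<alpha>) * - cos (2 * \<alpha>) = (2 * sin \<alpha> * cos \<alpha>)\<^sup>2"
    using sin_cos_squared_add[of "2 * \<alpha>"] unfolding sin_double by algebra
  ultimately show ?thesis
    by (simp add: norm_apex[OF assms])
qed

lemma cos_le_norm_if_cover_left_le:
  assumes "0 < \<alpha>" and "\<alpha> < pi / 2" and "0 \<le> snd P" and "cover_left \<alpha> P \<le> - 1"
  shows "cos \<alpha> \<le> norm P"
proof -
  obtain u v where P: "P = (u, v)"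
    by fastforce
  have cos: "0 < cos \<alpha>"
    using assms by (intro cos_gt_zero_pi) auto
  have "1 * cos \<alpha> \<le> (v * tan \<alpha> - u) * cos \<alpha>"
    using assms(4) cos by (intro mult_right_mono) (auto simp: P cover_left_def)
  then have "cos \<alpha> \<le> v * sin \<alpha> - u * cos \<alpha>"
    using cos by (simp add: tan_def algebra_simps)
  then have "(cos \<alpha>)\<^sup>2 \<le> (v * sin \<alpha> - u * cos \<alpha>)\<^sup>2"
    using cos by (intro power_mono) auto
  also have "\<dots> \<le> (v * sin \<alpha> - u * cos \<alpha>)\<^sup>2 + (u * sin \<alpha> + v * cos \<alpha>)\<^sup>2"
    by simp
  also have "\<dots> = u\<^sup>2 + v\<^sup>2"
    using sin_cos_squared_add[of \<alpha>] by algebra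
  finally show ?thesis
    using cos by (simp add: P norm_Pair real_le_rsqrt)
qed

text \<open>The vectors \<open>(tan \<alpha>, 1)\<close> and \<open>(- tan \<alpha>, 1)\<close> span the edges of the cone of positions covering
  \<open>[-1, r]\<close>, so this makes the apex the point of that cone nearest to the origin.\<close>
lemma apex_inner_edges_nonneg:
  assumes "0 < \<alpha>" and "\<alpha> < pi / 2" and r: "- cos (2 * \<alpha>) \<le> r" "r \<le> 1"
  shows "0 \<le> fst (apex \<alpha> r) * tan \<alpha> + snd (apex \<alpha> r)"
    and "0 \<le> snd (apex \<alpha> r) - fst (apex \<alpha> r) * tan \<alpha>"
proof -
  define k where "k = tan \<alpha>"
  have k: "0 < k" and cos: "0 < cos \<alpha>"
    using assms by (auto simp: k_def intro: tan_gt_zero cos_gt_zero_pi)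
  have "(r - 1) * k\<^sup>2 + 1 + r = ((r - 1) * (sin \<alpha>)\<^sup>2 + (1 + r) * (cos \<alpha>)\<^sup>2) / (cos \<alpha>)\<^sup>2"
    using cos by (simp add: k_def tan_def field_simps)
  also have "(r - 1) * (sin \<alpha>)\<^sup>2 + (1 + r) * (cos \<alpha>)\<^sup>2 = r + cos (2 * \<alpha>)"
    using sin_cos_squared_add[of \<alpha>] unfolding cos_double by algebra
  finally have "0 \<le> (r - 1) * k\<^sup>2 + 1 + r"
    using r by simp
  also have "\<dots> = (2 * k) * (fst (apex \<alpha> r) * k + snd (apex \<alpha> r))"
    using k by (simp add: apex_def k_def field_simps power2_eq_square)
  finally show "0 \<le> fst (apex \<alpha> r) * tan \<alpha> + snd (apex \<alpha> r)"
    using k by (simp add: zero_le_mult_iff k_def)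
  have "- 1 \<le> r"
    using r(1) cos_le_one[of "2 * \<alpha>"] by linarith
  then have "0 \<le> snd (apex \<alpha> r)" "fst (apex \<alpha> r) * k \<le> 0"
    using k r(2) by (simp_all add: apex_def k_def mult_nonpos_nonneg)
  then show "0 \<le> snd (apex \<alpha> r) - fst (apex \<alpha> r) * tan \<alpha>"
    by (simp add: k_def)
qed

lemma norm_apex_le:
  assumes "0 < \<alpha>" and "\<alpha> < pi / 2" and r: "- cos (2 * \<alpha>) \<le> r" "r \<le> 1"
    and P: "cover_left \<alpha> P \<le> - 1" "r \<le> cover_right \<alpha> P"
  shows "norm (apex \<alpha> r) \<le> norm P"
proof -
  define k where "k = tan \<alpha>"
  have k: "0 < k"
    using assms(1,2) by (simp add: k_def tan_gt_zero)
  obtain a1 a2 where a: "apex \<alpha> r = (a1, a2)"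
    by fastforce
  have edges: "0 \<le> a1 * k + a2" "0 \<le> a2 - a1 * k"
    using apex_inner_edges_nonneg[OF assms(1-4)] by (simp_all add: a k_def)
  have ends: "a1 - a2 * k = - 1" "a1 + a2 * k = r"
    using cover_apex[of \<alpha> r] k by (simp_all add: a cover_left_def cover_right_def k_def)
  define w1 where "w1 = fst P - a1"
  define w2 where "w2 = snd P - a2"
  have w: "P = (a1 + w1, a2 + w2)"
    by (simp add: w1_def w2_def)
  have "w2 * k - w1 = - 1 - cover_left \<alpha> P" "w1 + w2 * k = cover_right \<alpha> P - r"
    using ends by (simp_all add: w cover_left_def cover_right_def flip: k_def) (simp_all add: algebra_simps)
  then have "0 \<le> (w1 + w2 * k) * (a1 * k + a2) + (w2 * k - w1) * (a2 - a1 * k)"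
    using P edges by simp
  also have "\<dots> = (2 * k) * (a1 * w1 + a2 * w2)"
    by (simp add: algebra_simps)
  finally have "0 \<le> a1 * w1 + a2 * w2"
    using k by (simp add: zero_le_mult_iff)
  then have "a1\<^sup>2 + a2\<^sup>2 \<le> (a1 + w1)\<^sup>2 + (a2 + w2)\<^sup>2"
    by (simp add: power2_eq_square algebra_simps)
  then show ?thesis
    by (simp add: a w norm_Pair)
qed

lemma good_input_bounds:
  assumes "good_input n xs" and "j \<le> n"
  shows "- 1 \<le> xs j" and "xs j \<le> (MAX j\<in>{..n}. xs j)"
proof -
  have "(MIN j\<in>{..n}. xs j) \<le> xs j"
    using assms(2) by (intro Min_le) auto
  then show "- 1 \<le> xs j"
    using assms(1) by (simp add: good_input_def)
  show "xs j \<le> (MAX j\<in>{..n}. xs j)"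
    using assms(2) by (intro Max_ge) auto
qed

lemma apex_is_solution:
  assumes "0 < \<alpha>" and "\<alpha> < pi / 2" and good: "good_input n xs"
  shows "is_solution \<alpha> n xs (\<lambda>i. if i = 0 then (0, 0) else apex \<alpha> (MAX j\<in>{..n}. xs j))"
proof -
  define b where "b = (MAX j\<in>{..n}. xs j)"
  have k: "0 < tan \<alpha>"
    using assms(1,2) by (rule tan_gt_zero)
  have "apex \<alpha> b \<in> FC \<alpha> xs i" if "i \<le> n" for i
  proof -
    have "- 1 \<le> (MIN j\<in>{..i}. xs j)" "(MAX j\<in>{..i}. xs j) \<le> b"
      using good_input_bounds[OF good] that by (auto simp: b_def)
    moreover have "0 \<le> snd (apex \<alpha> b)"
      using good k by (simp add: good_input_def b_def apex_def)
    ultimately show ?thesis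
      using k by (simp add: mem_FC_iff cover_apex)
  qed
  moreover have "(0, 0) \<in> FC \<alpha> xs 0"
    using good by (simp add: mem_FC_iff good_input_def cover_left_def cover_right_def)
  ultimately show ?thesis
    by (auto simp: is_solution_def b_def)
qed

lemma norm_apex_le_OPT:
  assumes "0 < \<alpha>" and "\<alpha> < pi / 2" and good: "good_input n xs"
  shows "norm (apex \<alpha> (max (MAX j\<in>{..n}. xs j) (- cos (2 * \<alpha>)))) \<le> OPT \<alpha> n xs"
  unfolding OPT_def
proof (rule cInf_greatest)
  show "{cost n P | P. is_solution \<alpha> n xs P} \<noteq> {}"
    using apex_is_solution[OF assms] by blast
next
  fix c
  assume "c \<in> {cost n P | P. is_solution \<alpha> n xs P}"
  then obtain P where c: "c = cost n P" and sol: "is_solution \<alpha> n xs P"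
    by blast
  define b where "b = (MAX j\<in>{..n}. xs j)"
  have "P n \<in> FC \<alpha> xs n"
    using sol by (simp add: is_solution_def)
  moreover have "(MIN j\<in>{..n}. xs j) = - 1"
    using good by (simp add: good_input_def)
  ultimately have Pn: "0 \<le> snd (P n)" "cover_left \<alpha> (P n) \<le> - 1" "b \<le> cover_right \<alpha> (P n)"
    unfolding mem_FC_iff b_def by simp_all
  have "norm (apex \<alpha> (max b (- cos (2 * \<alpha>)))) \<le> norm (P n)"
  proof (cases "- cos (2 * \<alpha>) \<le> b")
    case True
    then show ?thesis
      using norm_apex_le[OF assms(1,2) True _ Pn(2,3)] good by (simp add: good_input_def b_def)
  next
    case False
    then show ?thesis
      using cos_le_norm_if_cover_left_le[OF assms(1,2) Pn(1,2)]
      by (simp add: norm_apex_neg_cos_double[OF assms(1,2)])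
  qed
  also have "norm (P n) = dist (P 0) (P n)"
    using sol by (simp add: is_solution_def flip: zero_prod_def)
  also have "\<dots> \<le> c"
    unfolding c by (rule dist_le_cost)
  finally show "norm (apex \<alpha> (max (MAX j\<in>{..n}. xs j) (- cos (2 * \<alpha>)))) \<le> c"
    by (simp add: b_def)
qed

lemma OPT_eq_norm_apex:
  assumes "0 < \<alpha>" and "\<alpha> < pi / 2" and good: "good_input n xs"
    and "- cos (2 * \<alpha>) \<le> (MAX j\<in>{..n}. xs j)"
  shows "OPT \<alpha> n xs = norm (apex \<alpha> (MAX j\<in>{..n}. xs j))"
proof (rule antisym)
  define S where "S = (\<lambda>i::nat. if i = 0 then (0, 0) else apex \<alpha> (MAX j\<in>{..n}. xs j))"
  obtain m where n: "n = Suc m"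
    using good by (cases n) (auto simp: good_input_def)
  have "cost n S = edist (S 0) (S (Suc 0)) + (\<Sum>i<m. edist (S (Suc i)) (S (Suc (Suc i))))"
    unfolding cost_def n by (rule sum.lessThan_Suc_shift)
  then have "cost n S = norm (apex \<alpha> (MAX j\<in>{..n}. xs j))"
    by (simp add: S_def edist_eq_dist flip: zero_prod_def)
  moreover have "OPT \<alpha> n xs \<le> cost n S"
    unfolding OPT_def
    using apex_is_solution[OF assms(1-3)] cost_nonneg
    by (intro cInf_lower bdd_belowI[where m = 0]) (auto simp: S_def)
  ultimately show "OPT \<alpha> n xs \<le> norm (apex \<alpha> (MAX j\<in>{..n}. xs j))"
    by simp
  show "norm (apex \<alpha> (MAX j\<in>{..n}. xs j)) \<le> OPT \<alpha> n xs"
    using norm_apex_le_OPT[OF assms(1-3)] assms(4) by simp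
qed

section \<open>The \<open>\<beta>\<close>-Hedge algorithm\<close>

locale hedge_angles =
  fixes \<alpha> \<beta> :: real
  assumes alpha_pos: "0 < \<alpha>" and alpha_less: "\<alpha> < pi / 2"
    and beta_nonneg: "0 \<le> \<beta>" and beta_le_alpha: "\<beta> \<le> \<alpha>"
begin

lemma tan_alpha_pos: "0 < tan \<alpha>"
  using alpha_pos alpha_less by (rule tan_gt_zero)

lemma tan_beta_nonneg: "0 \<le> tan \<beta>"
  using tan_mono_le[of 0 \<beta>] beta_nonneg beta_le_alpha alpha_less by simp

lemma tan_beta_le: "tan \<beta> \<le> tan \<alpha>"
  using beta_nonneg beta_le_alpha alpha_less by (intro tan_mono_le) auto

lemma cos_beta_pos: "0 < cos \<beta>"
  using beta_nonneg beta_le_alpha alpha_less by (intro cos_gt_zero_pi) auto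

lemma tan_add_pos: "0 < tan \<alpha> + tan \<beta>"
  using tan_alpha_pos tan_beta_nonneg by linarith

text \<open>When the right end of the covered segment advances by \<open>d\<close>, the left end recedes by
  \<open>\<kappa> * d\<close>: this is the hedge against a request on the other side.\<close>
definition \<kappa> :: real where
  "\<kappa> = (tan \<alpha> - tan \<beta>) / (tan \<alpha> + tan \<beta>)"

lemma kappa_nonneg: "0 \<le> \<kappa>"
  using tan_beta_le tan_add_pos by (simp add: \<kappa>_def)

lemma kappa_le_one: "\<kappa> \<le> 1"
  using tan_beta_nonneg tan_add_pos by (simp add: \<kappa>_def)

lemma cover_ray_pt:
  assumes "0 < x"
  shows "cover_right \<alpha> (ray_pt \<beta> x P t) = cover_right \<alpha> P + t * cos \<beta> * (tan \<alpha> + tan \<beta>)"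
    and "cover_left \<alpha> (ray_pt \<beta> x P t) = cover_left \<alpha> P - t * cos \<beta> * (tan \<alpha> - tan \<beta>)"
    and "snd (ray_pt \<beta> x P t) = snd P + t * cos \<beta>"
proof -
  have "sin \<beta> = tan \<beta> * cos \<beta>"
    using cos_beta_pos by (simp add: tan_def)
  then show "cover_right \<alpha> (ray_pt \<beta> x P t) = cover_right \<alpha> P + t * cos \<beta> * (tan \<alpha> + tan \<beta>)"
    and "cover_left \<alpha> (ray_pt \<beta> x P t) = cover_left \<alpha> P - t * cos \<beta> * (tan \<alpha> - tan \<beta>)"
    and "snd (ray_pt \<beta> x P t) = snd P + t * cos \<beta>"
    using assms by (simp_all add: ray_pt_def cover_left_def cover_right_def algebra_simps)
qed

lemma ray_pt_mem_FC_Suc_iff: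
  assumes P: "0 \<le> snd P" "cover_left \<alpha> P \<le> (MIN j\<in>{..i}. xs j)"
    and beyond: "(MAX j\<in>{..i}. xs j) < xs (Suc i)" and pos: "0 < xs (Suc i)" and "0 \<le> \<tau>"
  shows "ray_pt \<beta> (xs (Suc i)) P \<tau> \<in> FC \<alpha> xs (Suc i)
    \<longleftrightarrow> max 0 (xs (Suc i) - cover_right \<alpha> P) / (cos \<beta> * (tan \<alpha> + tan \<beta>)) \<le> \<tau>"
proof -
  have cb: "0 < cos \<beta> * (tan \<alpha> + tan \<beta>)"
    using cos_beta_pos tan_add_pos by simp
  have "0 \<le> \<tau> * cos \<beta> * (tan \<alpha> - tan \<beta>)"
    using assms(5) cos_beta_pos tan_beta_le by simp
  then have "cover_left \<alpha> (ray_pt \<beta> (xs (Suc i)) P \<tau>) \<le> (MIN j\<in>{..Suc i}. xs j)"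
    using P(2) by (simp only: cover_ray_pt(2)[OF pos] Min_Max_atMost_Suc_above(1)[OF beyond])
  moreover have "0 \<le> snd (ray_pt \<beta> (xs (Suc i)) P \<tau>)"
    using assms(5) P(1) cos_beta_pos by (simp add: cover_ray_pt(3)[OF pos])
  moreover have "0 \<le> \<tau> * (cos \<beta> * (tan \<alpha> + tan \<beta>))"
    using assms(5) cb by simp
  then have "xs (Suc i) \<le> cover_right \<alpha> (ray_pt \<beta> (xs (Suc i)) P \<tau>)
      \<longleftrightarrow> max 0 (xs (Suc i) - cover_right \<alpha> P) / (cos \<beta> * (tan \<alpha> + tan \<beta>)) \<le> \<tau>"
    by (auto simp: cover_ray_pt(1)[OF pos] pos_divide_le_eq[OF cb] mult.assoc)
  ultimately show ?thesis
    by (simp only: mem_FC_iff Min_Max_atMost_Suc_above(2)[OF beyond]) blast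
qed

lemma hedge_step_right:
  assumes feasible: "hedge \<alpha> \<beta> xs i \<in> FC \<alpha> xs i"
    and beyond: "(MAX j\<in>{..i}. xs j) < xs (Suc i)" and pos: "0 < xs (Suc i)"
  defines "P \<equiv> hedge \<alpha> \<beta> xs i" and "Q \<equiv> hedge \<alpha> \<beta> xs (Suc i)"
  shows "cover_right \<alpha> Q = max (cover_right \<alpha> P) (xs (Suc i))"
    and "cover_left \<alpha> Q = cover_left \<alpha> P - \<kappa> * max 0 (xs (Suc i) - cover_right \<alpha> P)"
    and "dist P Q = (snd Q - snd P) / cos \<beta>"
proof -
  define d where "d = max 0 (xs (Suc i) - cover_right \<alpha> P)"
  define t where "t = d / (cos \<beta> * (tan \<alpha> + tan \<beta>))"
  have t: "0 \<le> t" "t * cos \<beta> * (tan \<alpha> + tan \<beta>) = d"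
    using cos_beta_pos tan_add_pos by (auto simp: t_def d_def)
  have "0 \<le> snd P" "cover_left \<alpha> P \<le> (MIN j\<in>{..i}. xs j)"
    using feasible by (auto simp: mem_FC_iff P_def)
  note enter = ray_pt_mem_FC_Suc_iff[OF this beyond pos, folded d_def t_def]
  have "{\<tau>. 0 \<le> \<tau> \<and> ray_pt \<beta> (xs (Suc i)) P \<tau> \<in> FC \<alpha> xs (Suc i)} = {t..}"
    using enter t(1) by auto
  then have Q: "Q = ray_pt \<beta> (xs (Suc i)) P t"
    unfolding Q_def P_def by (rule hedge_Suc_eq_ray_pt[OF _ t(1)])
  have "t * cos \<beta> * (tan \<alpha> - tan \<beta>) = \<kappa> * d"
    unfolding t(2)[symmetric] \<kappa>_def using tan_add_pos by (simp add: field_simps)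
  then show "cover_right \<alpha> Q = max (cover_right \<alpha> P) (xs (Suc i))"
    and "cover_left \<alpha> Q = cover_left \<alpha> P - \<kappa> * max 0 (xs (Suc i) - cover_right \<alpha> P)"
    using t pos by (auto simp: Q cover_ray_pt d_def)
  show "dist P Q = (snd Q - snd P) / cos \<beta>"
    using t pos cos_beta_pos by (simp add: Q dist_ray_pt cover_ray_pt)
qed

lemma hedge_step_left:
  assumes feasible: "hedge \<alpha> \<beta> xs i \<in> FC \<alpha> xs i"
    and beyond: "xs (Suc i) < (MIN j\<in>{..i}. xs j)" and neg: "xs (Suc i) < 0"
  defines "P \<equiv> hedge \<alpha> \<beta> xs i" and "Q \<equiv> hedge \<alpha> \<beta> xs (Suc i)"
  shows "cover_left \<alpha> Q = min (cover_left \<alpha> P) (xs (Suc i))"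
    and "cover_right \<alpha> Q = cover_right \<alpha> P + \<kappa> * max 0 (cover_left \<alpha> P - xs (Suc i))"
    and "dist P Q = (snd Q - snd P) / cos \<beta>"
proof -
  have "(MAX j\<in>{..i}. - xs j) < - xs (Suc i)"
    using beyond by simp
  moreover have "0 < - xs (Suc i)"
    using neg by simp
  moreover have "hedge \<alpha> \<beta> (\<lambda>j. - xs j) i \<in> FC \<alpha> (\<lambda>j. - xs j) i"
    using feasible by (simp only: hedge_uminus apfst_uminus_mem_FC_iff)
  ultimately have "- cover_left \<alpha> Q = max (- cover_left \<alpha> P) (- xs (Suc i))"
    and "- cover_right \<alpha> Q = - cover_right \<alpha> P - \<kappa> * max 0 (- xs (Suc i) + cover_left \<alpha> P)"
    and "dist P Q = (snd Q - snd P) / cos \<beta>"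
    using hedge_step_right[of "\<lambda>j. - xs j" i]
    by (simp_all add: P_def Q_def hedge_uminus cover_left_apfst_uminus cover_right_apfst_uminus
        dist_apfst_uminus)
  then show "cover_left \<alpha> Q = min (cover_left \<alpha> P) (xs (Suc i))"
    and "cover_right \<alpha> Q = cover_right \<alpha> P + \<kappa> * max 0 (cover_left \<alpha> P - xs (Suc i))"
    and "dist P Q = (snd Q - snd P) / cos \<beta>"
    by (simp_all add: algebra_simps flip: minus_min_eq_max)
qed

lemma hedge_invariant_Suc:
  assumes "xs 0 = 0" and "\<not> redundant xs i"
    and inv: "cover_invariant \<kappa> (cover_left \<alpha> (hedge \<alpha> \<beta> xs i)) (cover_right \<alpha> (hedge \<alpha> \<beta> xs i))
      (MIN j\<in>{..i}. xs j) (MAX j\<in>{..i}. xs j)"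
  defines "P \<equiv> hedge \<alpha> \<beta> xs i" and "Q \<equiv> hedge \<alpha> \<beta> xs (Suc i)"
  shows "cover_invariant \<kappa> (cover_left \<alpha> Q) (cover_right \<alpha> Q)
      (MIN j\<in>{..Suc i}. xs j) (MAX j\<in>{..Suc i}. xs j)"
    and "dist P Q = (snd Q - snd P) / cos \<beta>"
proof -
  have feasible: "hedge \<alpha> \<beta> xs i \<in> FC \<alpha> xs i"
    using inv tan_alpha_pos by (rule mem_FC_if_cover_invariant)
  have "(MIN j\<in>{..i}. xs j) \<le> 0" "0 \<le> (MAX j\<in>{..i}. xs j)"
    using assms(1) Min_le[of "xs ` {..i}" "xs 0"] Max_ge[of "xs ` {..i}" "xs 0"] by simp_all
  moreover have "\<not> ((MIN j\<in>{..i}. xs j) \<le> xs (Suc i) \<and> xs (Suc i) \<le> (MAX j\<in>{..i}. xs j))"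
    using assms(2) unfolding redundant_def .
  ultimately consider "(MAX j\<in>{..i}. xs j) < xs (Suc i)" "0 < xs (Suc i)"
    | "xs (Suc i) < (MIN j\<in>{..i}. xs j)" "xs (Suc i) < 0"
    by linarith
  then have "cover_invariant \<kappa> (cover_left \<alpha> Q) (cover_right \<alpha> Q)
      (MIN j\<in>{..Suc i}. xs j) (MAX j\<in>{..Suc i}. xs j) \<and> dist P Q = (snd Q - snd P) / cos \<beta>"
  proof cases
    case 1
    then show ?thesis
      using hedge_step_right[OF feasible 1] cover_invariant_step_right[OF kappa_nonneg kappa_le_one inv 1(1)]
      by (simp add: Min_Max_atMost_Suc_above[OF 1(1)] P_def Q_def)
  next
    case 2
    then show ?thesis
      using hedge_step_left[OF feasible 2] cover_invariant_step_left[OF kappa_nonneg kappa_le_one inv 2(1)]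
      by (simp add: Min_Max_atMost_Suc_below[OF 2(1)] P_def Q_def)
  qed
  then show "cover_invariant \<kappa> (cover_left \<alpha> Q) (cover_right \<alpha> Q)
      (MIN j\<in>{..Suc i}. xs j) (MAX j\<in>{..Suc i}. xs j)"
    and "dist P Q = (snd Q - snd P) / cos \<beta>"
    by simp_all
qed

lemma hedge_invariant:
  assumes "xs 0 = 0" and "\<forall>j<i. \<not> redundant xs j"
  shows "cover_invariant \<kappa> (cover_left \<alpha> (hedge \<alpha> \<beta> xs i)) (cover_right \<alpha> (hedge \<alpha> \<beta> xs i))
           (MIN j\<in>{..i}. xs j) (MAX j\<in>{..i}. xs j)
         \<and> cost i (hedge \<alpha> \<beta> xs) = snd (hedge \<alpha> \<beta> xs i) / cos \<beta>"
  using assms(2)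
proof (induction i)
  case 0
  then show ?case
    using assms(1) by (simp add: cover_invariant_def cover_left_def cover_right_def cost_def)
next
  case (Suc i)
  then have "\<not> redundant xs i"
    and inv: "cover_invariant \<kappa> (cover_left \<alpha> (hedge \<alpha> \<beta> xs i)) (cover_right \<alpha> (hedge \<alpha> \<beta> xs i))
      (MIN j\<in>{..i}. xs j) (MAX j\<in>{..i}. xs j)"
    and "cost i (hedge \<alpha> \<beta> xs) = snd (hedge \<alpha> \<beta> xs i) / cos \<beta>"
    by simp_all
  then show ?case
    using hedge_invariant_Suc[OF assms(1) _ inv]
    by (simp add: cost_Suc edist_eq_dist diff_divide_distrib)
qed

lemma hedge_mem_FC:
  assumes "xs 0 = 0" and "\<forall>j<i. \<not> redundant xs j"
  shows "hedge \<alpha> \<beta> xs i \<in> FC \<alpha> xs i"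
  using hedge_invariant[OF assms] tan_alpha_pos by (blast intro: mem_FC_if_cover_invariant)

lemma cost_hedge:
  assumes "xs 0 = 0" and "\<forall>j<n. \<not> redundant xs j"
  shows "cost n (hedge \<alpha> \<beta> xs) = (cover_right \<alpha> (hedge \<alpha> \<beta> xs n) - cover_left \<alpha> (hedge \<alpha> \<beta> xs n))
           / ((1 + \<kappa>) * (cos \<beta> * (tan \<alpha> + tan \<beta>)))"
proof -
  have "(1 + \<kappa>) * (cos \<beta> * (tan \<alpha> + tan \<beta>)) = 2 * tan \<alpha> * cos \<beta>"
    using tan_add_pos by (simp add: \<kappa>_def field_simps)
  moreover have "cover_right \<alpha> (hedge \<alpha> \<beta> xs n) - cover_left \<alpha> (hedge \<alpha> \<beta> xs n)
      = 2 * tan \<alpha> * snd (hedge \<alpha> \<beta> xs n)"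
    by (simp add: cover_left_def cover_right_def)
  moreover have "cost n (hedge \<alpha> \<beta> xs) = snd (hedge \<alpha> \<beta> xs n) / cos \<beta>"
    using hedge_invariant[OF assms] by blast
  ultimately show ?thesis
    using tan_alpha_pos by (simp only:) simp
qed

definition worst_cost :: "real \<Rightarrow> real" where
  "worst_cost r = (1 + (1 - \<kappa>) * r) / (cos \<beta> * (tan \<alpha> + tan \<beta>))"

lemma cost_hedge_le_worst_cost:
  assumes "good_input n xs"
  shows "cost n (hedge \<alpha> \<beta> xs) \<le> worst_cost (MAX j\<in>{..n}. xs j)"
proof -
  have x0: "xs 0 = 0" and nonred: "\<forall>j<n. \<not> redundant xs j"
    and hull: "(MIN j\<in>{..n}. xs j) = - 1" "0 \<le> (MAX j\<in>{..n}. xs j)" "(MAX j\<in>{..n}. xs j) \<le> 1"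
    using assms by (simp_all add: good_input_def)
  have "cover_right \<alpha> (hedge \<alpha> \<beta> xs n) - cover_left \<alpha> (hedge \<alpha> \<beta> xs n)
      \<le> (1 + \<kappa>) * (1 + (1 - \<kappa>) * (MAX j\<in>{..n}. xs j))"
    using hedge_invariant[OF x0 nonred] hull
    by (intro cover_invariant_width_le kappa_nonneg kappa_le_one) simp_all
  then have "cost n (hedge \<alpha> \<beta> xs)
      \<le> (1 + \<kappa>) * (1 + (1 - \<kappa>) * (MAX j\<in>{..n}. xs j)) / ((1 + \<kappa>) * (cos \<beta> * (tan \<alpha> + tan \<beta>)))"
    unfolding cost_hedge[OF x0 nonred]
    using kappa_nonneg cos_beta_pos tan_add_pos by (intro divide_right_mono) simp_all
  then show ?thesis
    using kappa_nonneg by (simp add: worst_cost_def)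
qed

lemma cost_hedge_eq_worst_cost:
  assumes "xs 0 = 0" and "\<forall>j<n. \<not> redundant xs j"
    and "cover_right \<alpha> (hedge \<alpha> \<beta> xs n) - cover_left \<alpha> (hedge \<alpha> \<beta> xs n) = (1 + \<kappa>) * (1 + (1 - \<kappa>) * r)"
  shows "cost n (hedge \<alpha> \<beta> xs) = worst_cost r"
  using assms(3) kappa_nonneg by (simp add: cost_hedge[OF assms(1,2)] worst_cost_def)

lemma f1_eq: "f1 \<alpha> \<beta> r = worst_cost r / norm (apex \<alpha> r)"
proof -
  have "1 - \<kappa> = 2 * tan \<beta> / (tan \<alpha> + tan \<beta>)"
    using tan_add_pos by (simp add: \<kappa>_def field_simps)
  moreover have "0 < sin \<alpha>"
    using alpha_pos alpha_less by (intro sin_gt_zero) auto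
  ultimately show ?thesis
    using f1_radicand_pos[OF alpha_pos alpha_less, of r]
    by (simp add: f1_def worst_cost_def norm_apex[OF alpha_pos alpha_less])
qed

lemma hedge_ratio_le_f1:
  assumes good: "good_input n xs"
  shows "\<exists>r\<in>{max 0 (- cos (2 * \<alpha>))..1}. cost n (hedge \<alpha> \<beta> xs) / OPT \<alpha> n xs \<le> f1 \<alpha> \<beta> r"
proof -
  define b where "b = (MAX j\<in>{..n}. xs j)"
  define r where "r = max b (- cos (2 * \<alpha>))"
  have "0 \<le> b" "b \<le> 1"
    using good by (simp_all add: good_input_def b_def)
  then have r: "r \<in> {max 0 (- cos (2 * \<alpha>))..1}"
    using cos_ge_minus_one[of "2 * \<alpha>"] by (auto simp: r_def)
  have "0 < norm (apex \<alpha> r)"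
    using alpha_pos alpha_less f1_radicand_pos[OF alpha_pos alpha_less, of r]
    by (simp add: norm_apex sin_gt_zero)
  moreover have "norm (apex \<alpha> r) \<le> OPT \<alpha> n xs"
    unfolding r_def b_def by (rule norm_apex_le_OPT[OF alpha_pos alpha_less good])
  moreover have "worst_cost b \<le> worst_cost r"
    unfolding worst_cost_def r_def using kappa_le_one cos_beta_pos tan_add_pos
    by (intro divide_right_mono add_left_mono mult_left_mono) auto
  then have "cost n (hedge \<alpha> \<beta> xs) \<le> worst_cost r"
    using cost_hedge_le_worst_cost[OF good] by (simp add: b_def)
  ultimately have "cost n (hedge \<alpha> \<beta> xs) / OPT \<alpha> n xs \<le> worst_cost r / norm (apex \<alpha> r)"
    using cost_nonneg by (meson frac_le order.trans)
  then show ?thesis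
    using r by (auto simp: f1_eq)
qed

lemma hedge_ratio_eq_f1:
  assumes good: "good_input n xs" and large: "- cos (2 * \<alpha>) \<le> (MAX j\<in>{..n}. xs j)"
    and tight: "cover_right \<alpha> (hedge \<alpha> \<beta> xs n) - cover_left \<alpha> (hedge \<alpha> \<beta> xs n)
      = (1 + \<kappa>) * (1 + (1 - \<kappa>) * (MAX j\<in>{..n}. xs j))"
  shows "cost n (hedge \<alpha> \<beta> xs) / OPT \<alpha> n xs = f1 \<alpha> \<beta> (MAX j\<in>{..n}. xs j)"
proof -
  have "xs 0 = 0" and "\<forall>j<n. \<not> redundant xs j"
    using good by (simp_all add: good_input_def)
  then show ?thesis
    using cost_hedge_eq_worst_cost tight OPT_eq_norm_apex[OF alpha_pos alpha_less good large]
    by (simp add: f1_eq)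
qed

lemma hedge_ratio_left_request:
  assumes "- cos (2 * \<alpha>) \<le> 0"
  defines "xs \<equiv> \<lambda>i::nat. if i = 1 then - 1 else (0::real)"
  shows "good_input 1 xs" and "cost 1 (hedge \<alpha> \<beta> xs) / OPT \<alpha> 1 xs = f1 \<alpha> \<beta> 0"
proof -
  have atMost_1: "{..Suc 0} = {0, 1}"
    by auto
  have Max: "(MAX j\<in>{..Suc 0}. xs j) = 0"
    by (simp add: atMost_1 xs_def)
  show good: "good_input 1 xs"
    by (simp add: good_input_def redundant_def atMost_1 xs_def)
  have "(0, 0) \<in> FC \<alpha> xs 0"
    by (simp add: mem_FC_iff xs_def cover_left_def cover_right_def)
  then have "cover_left \<alpha> (hedge \<alpha> \<beta> xs 1) = - 1" "cover_right \<alpha> (hedge \<alpha> \<beta> xs 1) = \<kappa>"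
    using hedge_step_left[of xs 0] by (simp_all add: xs_def cover_left_def cover_right_def)
  then show "cost 1 (hedge \<alpha> \<beta> xs) / OPT \<alpha> 1 xs = f1 \<alpha> \<beta> 0"
    using hedge_ratio_eq_f1[OF good] assms(1) by (simp add: Max)
qed

lemma hedge_ratio_right_then_left_request:
  assumes r: "0 < r" "r \<le> 1" "- cos (2 * \<alpha>) \<le> r"
  defines "xs \<equiv> \<lambda>i::nat. if i = 1 then r else if i = 2 then - 1 else 0"
  shows "good_input 2 xs" and "cost 2 (hedge \<alpha> \<beta> xs) / OPT \<alpha> 2 xs = f1 \<alpha> \<beta> r"
proof -
  have atMost_1: "{..Suc 0} = {0, 1}" and atMost_2: "{..2::nat} = {0, 1, 2}"
    by auto
  have hull1: "(MIN j\<in>{..Suc 0}. xs j) = 0" "(MAX j\<in>{..Suc 0}. xs j) = r"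
    and hull2: "(MIN j\<in>{..2}. xs j) = - 1" "(MAX j\<in>{..2}. xs j) = r"
    using r by (simp_all add: atMost_1 atMost_2 xs_def)
  have "\<not> redundant xs 0" "\<not> redundant xs 1"
    using r hull1 by (simp_all add: redundant_def xs_def)
  then have nonred: "\<forall>j<2. \<not> redundant xs j"
    by (auto simp: less_2_cases_iff)
  then show good: "good_input 2 xs"
    using r hull2 by (simp add: good_input_def xs_def)
  have "(0, 0) \<in> FC \<alpha> xs 0"
    by (simp add: mem_FC_iff xs_def cover_left_def cover_right_def)
  then have step1: "cover_left \<alpha> (hedge \<alpha> \<beta> xs 1) = - \<kappa> * r" "cover_right \<alpha> (hedge \<alpha> \<beta> xs 1) = r"
    using hedge_step_right[of xs 0] r by (simp_all add: xs_def cover_left_def cover_right_def)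
  have "hedge \<alpha> \<beta> xs 1 \<in> FC \<alpha> xs 1"
    using nonred by (intro hedge_mem_FC) (auto simp: xs_def)
  moreover have "\<kappa> * r \<le> 1"
    using kappa_nonneg kappa_le_one r by (simp add: mult_le_one)
  ultimately have "cover_left \<alpha> (hedge \<alpha> \<beta> xs 2) = - 1"
    "cover_right \<alpha> (hedge \<alpha> \<beta> xs 2) = r + \<kappa> * (1 - \<kappa> * r)"
    using hedge_step_left[of xs 1] hull1 step1 r by (simp_all add: xs_def numeral_2_eq_2)
  then show "cost 2 (hedge \<alpha> \<beta> xs) / OPT \<alpha> 2 xs = f1 \<alpha> \<beta> r"
    using hedge_ratio_eq_f1[OF good] r by (simp add: hull2 algebra_simps)
qed

lemma hedge_ratio_attains_f1:
  assumes "r \<in> {max 0 (- cos (2 * \<alpha>))..1}"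
  shows "\<exists>n xs. good_input n xs \<and> cost n (hedge \<alpha> \<beta> xs) / OPT \<alpha> n xs = f1 \<alpha> \<beta> r"
proof (cases "r = 0")
  case True
  then show ?thesis
    using assms hedge_ratio_left_request by auto
next
  case False
  then show ?thesis
    using assms hedge_ratio_right_then_left_request[of r] by auto
qed

lemma continuous_on_f1: "continuous_on A (f1 \<alpha> \<beta>)"
proof -
  have "sqrt (1 + r\<^sup>2 + 2 * cos (2 * \<alpha>) * r) \<noteq> 0" for r
    using f1_radicand_pos[OF alpha_pos alpha_less, of r] by simp
  then show ?thesis
    unfolding f1_def by (intro continuous_intros) auto
qed

end

theorem lemma5:
  fixes \<alpha> \<beta> :: real
  assumes "0 < \<alpha>" and "\<alpha> < pi / 2" and "0 \<le> \<beta>" and "\<beta> \<le> \<alpha>"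
  shows "(\<exists>r0\<in>{max 0 (- cos (2 * \<alpha>))..1}.
            (\<forall>r\<in>{max 0 (- cos (2 * \<alpha>))..1}. f1 \<alpha> \<beta> r \<le> f1 \<alpha> \<beta> r0)
            \<and> hedge_CR \<alpha> \<beta> = ereal (f1 \<alpha> \<beta> r0))"
proof -
  interpret hedge_angles \<alpha> \<beta>
    using assms by unfold_locales
  define I where "I = {max 0 (- cos (2 * \<alpha>))..1}"
  obtain r0 where r0: "r0 \<in> I" and max: "\<forall>r\<in>I. f1 \<alpha> \<beta> r \<le> f1 \<alpha> \<beta> r0"
    using continuous_attains_sup[of I "f1 \<alpha> \<beta>"] continuous_on_f1 by (auto simp: I_def)
  have "cost n (hedge \<alpha> \<beta> xs) / OPT \<alpha> n xs \<le> f1 \<alpha> \<beta> r0" if "good_input n xs" for n xs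
    using hedge_ratio_le_f1[OF that] max unfolding I_def by fastforce
  then have "hedge_CR \<alpha> \<beta> \<le> ereal (f1 \<alpha> \<beta> r0)"
    unfolding hedge_CR_def by (intro SUP_least) auto
  moreover obtain n xs where "good_input n xs" "cost n (hedge \<alpha> \<beta> xs) / OPT \<alpha> n xs = f1 \<alpha> \<beta> r0"
    using hedge_ratio_attains_f1[of r0] r0 unfolding I_def by blast
  then have "ereal (f1 \<alpha> \<beta> r0) \<le> hedge_CR \<alpha> \<beta>"
    unfolding hedge_CR_def by (intro SUP_upper2[of "(n, xs)"]) auto
  ultimately show ?thesis
    using r0 max unfolding I_def by (blast intro: antisym)
qed

end
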